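(* Let $S$ be a semigroup whose loop problem (with respect to some finite semigroup choice of generators) is context-free, and let $\sigma : X^+ \to S$ be any finite semigroup choice of generators for $S$. Then the multiplication table $\{u \# v \# w^R : u, v, w \in X^+, (uv)\sigma = w\sigma\}$ of $S$ with respect to $\sigma$ and $X^+$ is a context-free language. In particular, $S$ is word hyperbolic in the sense of Duncan and Gilman.
   Context: Maps are written on the right. $X^+$, $X^*$: free semigroup and free monoid on $X$. For a monoid $M$ and surjective monoid morphism $\sigma : X^* \to M$, let $\overline{X} = \{\overline{x} : x \in X\}$ be new symbols, $\hat{X} = X \cup \overline{X}$; the loop automaton has vertex set $M$, for each $a \in M$, $x \in X$ an edge $a \to a(x\sigma)$ labelled $x$ and an edge $a(x\sigma) \to a$ labelled $\overline{x}$; the loop problem is the set of labels of paths from the identity to the identity. For a semigroup $S$ and surjective morphism $\sigma : X^+ \to S$, the loop problem of $S$ is the loop problem of $S^1$ ($S$ with a new identity adjoined even if one exists) with respect to the extension $X^* \to S^1$. Here $\#$ is a new symbol not in $X$ and $w^R$ is the reversal of $w$. A choice of representatives for $S$ is a finite semigroup choice of generators $\sigma : X^+ \to S$ with a subset $R \subseteq X^+$ such that $R\sigma = S$; it is regular if $R$ is regular; the multiplication table w.r.t. $\sigma$ and $R$ is $\{u\#v\#w^R : u,v,w \in R, (uv)\sigma = w\sigma\}$. $S$ is word hyperbolic in the sense of Duncan and Gilman if it admits a regular choice of representatives whose multiplication table is context-free. *)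

theory Defs
  imports Main
begin

text \<open>A semigroup is a type of class semigroup_mult.  The monoid S^1 is modelled by
  'a option, where None is the NEW adjoined identity (adjoined even if S has one).\<close>

fun mult1 :: "'a::semigroup_mult option \<Rightarrow> 'a option \<Rightarrow> 'a option" where
  "mult1 None b = b"
| "mult1 a None = a"
| "mult1 (Some a) (Some b) = Some (a * b)"

definition eval1 :: "('x \<Rightarrow> 'a::semigroup_mult) \<Rightarrow> 'x list \<Rightarrow> 'a option" where
  "eval1 g w = foldr (\<lambda>x acc. mult1 (Some (g x)) acc) w None"

text \<open>The semigroup morphism X^+ -> S (only meaningful on nonempty words).\<close>
definition sigma :: "('x \<Rightarrow> 'a::semigroup_mult) \<Rightarrow> 'x list \<Rightarrow> 'a" where
  "sigma g w = the (eval1 g w)"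

definition gen_choice :: "'x set \<Rightarrow> ('x \<Rightarrow> 'a::semigroup_mult) \<Rightarrow> bool" where
  "gen_choice X g \<longleftrightarrow> finite X \<and> (\<forall>s. \<exists>w \<in> lists X. w \<noteq> [] \<and> sigma g w = s)"

text \<open>Letters of hat X: Inl x is x, Inr x is overline x.  loop_path X g a w c:
  there is a path in the loop automaton of S^1 from a to c labelled w.\<close>
inductive loop_path :: "'x set \<Rightarrow> ('x \<Rightarrow> 'a::semigroup_mult) \<Rightarrow> 'a option \<Rightarrow> ('x + 'x) list \<Rightarrow> 'a option \<Rightarrow> bool"
  for X g where
  lp_nil: "loop_path X g a [] a"
| lp_fwd: "x \<in> X \<Longrightarrow> loop_path X g (mult1 a (Some (g x))) w c \<Longrightarrow> loop_path X g a (Inl x # w) c"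
| lp_bwd: "x \<in> X \<Longrightarrow> mult1 b (Some (g x)) = a \<Longrightarrow> loop_path X g b w c \<Longrightarrow> loop_path X g a (Inr x # w) c"

definition loop_problem :: "'x set \<Rightarrow> ('x \<Rightarrow> 'a::semigroup_mult) \<Rightarrow> ('x + 'x) list set" where
  "loop_problem X g = {w. loop_path X g None w None}"

text \<open>Context-free grammars with nonterminals in nat (any finite grammar can be so encoded);
  a production is (A, rhs) with rhs a list of nonterminals (Inl) and terminals (Inr).\<close>
inductive derives :: "(nat \<times> (nat + 't) list) set \<Rightarrow> (nat + 't) list \<Rightarrow> 't list \<Rightarrow> bool"
  for P where
  der_nil: "derives P [] []"
| der_term: "derives P \<alpha> w \<Longrightarrow> derives P (Inr t # \<alpha>) (t # w)"
| der_nt: "(B, \<beta>) \<in> P \<Longrightarrow> derives P \<beta> u \<Longrightarrow> derives P \<alpha> w \<Longrightarrow> derives P (Inl B # \<alpha>) (u @ w)"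

definition cfg_lang :: "(nat \<times> (nat + 't) list) set \<Rightarrow> nat \<Rightarrow> 't list set" where
  "cfg_lang P S = {w. derives P [Inl S] w}"

definition context_free :: "'t list set \<Rightarrow> bool" where
  "context_free L \<longleftrightarrow> (\<exists>P S. finite P \<and> L = cfg_lang P S)"

fun nfa_reach :: "(nat \<Rightarrow> 't \<Rightarrow> nat set) \<Rightarrow> nat \<Rightarrow> 't list \<Rightarrow> nat set" where
  "nfa_reach \<delta> q [] = {q}"
| "nfa_reach \<delta> q (t # w) = (\<Union>q' \<in> \<delta> q t. nfa_reach \<delta> q' w)"

definition regular :: "'t list set \<Rightarrow> bool" where
  "regular L \<longleftrightarrow> (\<exists>Q q0 F \<delta>. finite Q \<and> q0 \<in> Q \<and> F \<subseteq> Q \<and> (\<forall>q t. \<delta> q t \<subseteq> Q) \<and>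
      L = {w. nfa_reach \<delta> q0 w \<inter> F \<noteq> {}})"

text \<open>Terminal None is the separator #, Some x is the letter x.\<close>
definition mult_table :: "('x \<Rightarrow> 'a::semigroup_mult) \<Rightarrow> 'x list set \<Rightarrow> 'x option list set" where
  "mult_table g R = {map Some u @ [None] @ map Some v @ [None] @ map Some (rev w) | u v w.
      u \<in> R \<and> v \<in> R \<and> w \<in> R \<and> sigma g (u @ v) = sigma g w}"

definition plus_words :: "'x set \<Rightarrow> 'x list set" where
  "plus_words X = {w \<in> lists X. w \<noteq> []}"

text \<open>Regular choice of representatives with context-free multiplication table.
  Generating alphabets are taken inside nat (every finite alphabet can be encoded).\<close>
definition word_hyperbolic_DG :: "'a::semigroup_mult itself \<Rightarrow> bool" where
  "word_hyperbolic_DG _ \<longleftrightarrow> (\<exists>(X::nat set) (g::nat \<Rightarrow> 'a) R.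
      gen_choice X g \<and> R \<subseteq> plus_words X \<and> (\<forall>s. \<exists>w \<in> R. sigma g w = s) \<and>
      regular R \<and> context_free (mult_table g R))"

end

theory Submission
  imports Defs "HOL-Library.Countable_Set" "HOL-Library.Sublist"
begin

text \<open>Fix for every generator x of X a word \<phi> x over Y representing the same element of S.
  Then u # v # w^R lies in the multiplication table iff the loop word
  \<phi>(u) \<phi>(v) followed by \<phi>(w) read backwards with barred letters is a loop at the adjoined
  identity of S^1, i.e. lies in the loop problem.  A finite transducer that reads loop words and
  writes u # v # w^R thus maps the loop problem onto the multiplication table, and context-free
  languages are closed under finite transductions: after splitting transitions into single
  letters, the triple construction provides a grammar whose nonterminal (p, B, r) generates the
  outputs of the runs from p to r on the words derived from B.  Duncan--Gilman hyperbolicity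
  follows by taking all nonempty words as (regular) representatives, after renaming the
  generators as natural numbers.\<close>

section \<open>Context-free languages are closed under finite transductions\<close>

lemma derives_Inr_Cons_iff:
  "derives P (Inr t # \<alpha>) w \<longleftrightarrow> (\<exists>w'. w = t # w' \<and> derives P \<alpha> w')"
  by (auto elim: derives.cases intro: derives.der_term)

lemma derives_map_Inr_iff: "derives P (map Inr xs) w \<longleftrightarrow> w = xs"
  by (induction xs arbitrary: w)
    (auto simp: derives_Inr_Cons_iff elim: derives.cases intro: derives.der_nil)

lemma derives_Nil_iff [simp]: "derives P [] w \<longleftrightarrow> w = []"
  by (auto elim: derives.cases intro: derives.der_nil)

lemma derives_Inl_iff:
  "derives P [Inl B] w \<longleftrightarrow> (\<exists>\<beta>. (B, \<beta>) \<in> P \<and> derives P \<beta> w)"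
proof
  assume "derives P [Inl B] w"
  then show "\<exists>\<beta>. (B, \<beta>) \<in> P \<and> derives P \<beta> w"
    by (cases rule: derives.cases) auto
next
  assume "\<exists>\<beta>. (B, \<beta>) \<in> P \<and> derives P \<beta> w"
  then show "derives P [Inl B] w"
    using derives.der_nt[of B _ P w "[]" "[]"] by auto
qed

inductive transduces :: "('q \<times> 'i list \<times> 'o list \<times> 'q) set \<Rightarrow> 'q \<Rightarrow> 'i list \<Rightarrow> 'q \<Rightarrow> 'o list \<Rightarrow> bool"
  for D where
  transduces_Nil: "transduces D p [] p []"
| transduces_step: "(p, \<alpha>, out, r) \<in> D \<Longrightarrow> transduces D r w q ou \<Longrightarrow>
    transduces D p (\<alpha> @ w) q (out @ ou)"

lemma transduces_append:
  "transduces D p w1 r o1 \<Longrightarrow> transduces D r w2 q o2 \<Longrightarrow> transduces D p (w1 @ w2) q (o1 @ o2)"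
  by (induction rule: transduces.induct) (auto dest: transduces_step)

lemma transduces_transition: "(p, \<alpha>, out, q) \<in> D \<Longrightarrow> transduces D p \<alpha> q out"
  using transduces_step[OF _ transduces_Nil] by fastforce

lemma transduces_loop:
  assumes "\<And>x. x \<in> set xs \<Longrightarrow> (p, \<alpha> x, out x, p) \<in> D"
  shows "transduces D p (concat (map \<alpha> xs)) p (concat (map out xs))"
  using assms by (induction xs) (auto intro: transduces_Nil transduces_step)

locale letter_transducer =
  fixes D :: "('q \<times> 't list \<times> 'o list \<times> 'q) set" and Q :: "'q set"
  assumes finite_states: "finite Q" and finite_transitions: "finite D"
    and transition_states: "(p, \<alpha>, out, r) \<in> D \<Longrightarrow> p \<in> Q \<and> r \<in> Q"
    and letter_labels: "(p, \<alpha>, out, r) \<in> D \<Longrightarrow> length \<alpha> = 1"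
begin

lemma transduces_Nil_iff: "transduces D p [] q ou \<longleftrightarrow> q = p \<and> ou = []"
  by (auto elim: transduces.cases dest!: letter_labels intro: transduces_Nil)

lemma transduces_ConsE:
  assumes "transduces D p (t # w) q ou"
  obtains out r ou' where "(p, [t], out, r) \<in> D" "transduces D r w q ou'" "ou = out @ ou'"
  using assms
proof (cases rule: transduces.cases)
  case (transduces_step \<alpha> out r w' ou')
  from \<open>(p, \<alpha>, out, r) \<in> D\<close> have "length \<alpha> = 1" by (rule letter_labels)
  then obtain t' where "\<alpha> = [t']" by (cases \<alpha>) auto
  with transduces_step that show ?thesis by auto
qed

lemma transduces_append_split:
  "transduces D p (w1 @ w2) q ou \<Longrightarrow>
    \<exists>r o1 o2. transduces D p w1 r o1 \<and> transduces D r w2 q o2 \<and> ou = o1 @ o2"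
proof (induction w1 arbitrary: p ou)
  case Nil
  then show ?case using transduces_Nil by fastforce
next
  case (Cons t w1)
  then obtain out r ou' where
    step: "(p, [t], out, r) \<in> D" and rest: "transduces D r (w1 @ w2) q ou'" and ou: "ou = out @ ou'"
    by (auto elim: transduces_ConsE)
  from Cons.IH[OF rest] obtain r' o1 o2 where
    "transduces D r w1 r' o1" "transduces D r' w2 q o2" "ou' = o1 @ o2"
    by blast
  with step ou show ?case
    using transduces_step[of p "[t]" out r D w1 r' o1] by fastforce
qed

lemma transduces_target_state: "transduces D p w q ou \<Longrightarrow> p \<in> Q \<Longrightarrow> q \<in> Q"
  by (induction rule: transduces.induct) (auto dest: transition_states)

text \<open>Triple construction: the nonterminal triple_nt p B r (odd) derives the outputs of the runs
  from p to r on words derived from B, transition_nt d (even, positive) derives the output of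
  the transition d, and 0 is the start symbol.\<close>

definition triple_nt :: "'q \<Rightarrow> nat \<Rightarrow> 'q \<Rightarrow> nat" where
  "triple_nt p B r = 2 * prod_encode (to_nat_on Q p, prod_encode (B, to_nat_on Q r)) + 1"

definition transition_nt :: "'q \<times> 't list \<times> 'o list \<times> 'q \<Rightarrow> nat" where
  "transition_nt d = 2 * to_nat_on D d + 2"

lemma triple_nt_eq_iff:
  "p \<in> Q \<Longrightarrow> r \<in> Q \<Longrightarrow> p' \<in> Q \<Longrightarrow> r' \<in> Q \<Longrightarrow>
    triple_nt p B r = triple_nt p' B' r' \<longleftrightarrow> p = p' \<and> B = B' \<and> r = r'"
  using countable_finite[OF finite_states] by (auto simp: triple_nt_def prod_encode_eq)

lemma transition_nt_eq_iff: "d \<in> D \<Longrightarrow> d' \<in> D \<Longrightarrow> transition_nt d = transition_nt d' \<longleftrightarrow> d = d'"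
  using countable_finite[OF finite_transitions] by (auto simp: transition_nt_def)

lemma triple_nt_neq_transition_nt [simp]:
  "triple_nt p B r \<noteq> transition_nt d" "transition_nt d \<noteq> triple_nt p B r"
  unfolding triple_nt_def transition_nt_def by presburger+

lemma triple_nt_neq_0 [simp]: "triple_nt p B r \<noteq> 0" "0 \<noteq> triple_nt p B r"
  and transition_nt_neq_0 [simp]: "transition_nt d \<noteq> 0" "0 \<noteq> transition_nt d"
  by (simp_all add: triple_nt_def transition_nt_def)

inductive lifted_form :: "'q \<Rightarrow> (nat + 't) list \<Rightarrow> 'q \<Rightarrow> (nat + 'o) list \<Rightarrow> bool" where
  lifted_Nil: "lifted_form p [] p []"
| lifted_Inl: "p \<in> Q \<Longrightarrow> r \<in> Q \<Longrightarrow> lifted_form r \<alpha> q \<gamma> \<Longrightarrow>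
    lifted_form p (Inl B # \<alpha>) q (Inl (triple_nt p B r) # \<gamma>)"
| lifted_Inr: "(p, [t], out, r) \<in> D \<Longrightarrow> lifted_form r \<alpha> q \<gamma> \<Longrightarrow>
    lifted_form p (Inr t # \<alpha>) q (Inl (transition_nt (p, [t], out, r)) # \<gamma>)"

lemma lifted_form_bounds:
  assumes "lifted_form p \<alpha> q \<gamma>" "set \<alpha> \<subseteq> A"
  shows "q \<in> insert p Q \<and> length \<gamma> = length \<alpha> \<and>
    set \<gamma> \<subseteq> Inl ` ((\<lambda>(p, B, r). triple_nt p B r) ` (Q \<times> Inl -` A \<times> Q) \<union> transition_nt ` D)"
  using assms
proof (induction rule: lifted_form.induct)
  case (lifted_Inl p r \<alpha> q \<gamma> B)
  then have "triple_nt p B r \<in> (\<lambda>(p, B, r). triple_nt p B r) ` (Q \<times> Inl -` A \<times> Q)"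
    by (intro rev_image_eqI[of "(p, B, r)"]) auto
  with lifted_Inl show ?case by auto
qed (auto dest: transition_states)

lemma finite_lifted_forms: "finite {(q, \<gamma>). lifted_form p \<alpha> q \<gamma>}"
proof -
  let ?letters = "Inl ` ((\<lambda>(p, B, r). triple_nt p B r) ` (Q \<times> Inl -` set \<alpha> \<times> Q) \<union> transition_nt ` D)"
  have "finite (Inl -` set \<alpha>)"
    by (rule finite_vimageI) (auto simp: inj_on_def)
  then have "finite (insert p Q \<times> {\<gamma>. set \<gamma> \<subseteq> ?letters \<and> length \<gamma> = length \<alpha>})"
    using finite_states finite_transitions by (intro finite_SigmaI finite_lists_length_eq) auto
  then show ?thesis
    by (rule finite_subset[rotated]) (auto dest: lifted_form_bounds[OF _ order_refl])
qed

definition lifted_grammar ::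
    "(nat \<times> (nat + 't) list) set \<Rightarrow> nat \<Rightarrow> 'q \<Rightarrow> 'q set \<Rightarrow> (nat \<times> (nat + 'o) list) set" where
  "lifted_grammar P S q0 F =
     {(0, [Inl (triple_nt q0 S f)]) | f. f \<in> F \<inter> Q}
   \<union> {(triple_nt p B r, \<gamma>) | p B r \<beta> \<gamma>. (B, \<beta>) \<in> P \<and> p \<in> Q \<and> r \<in> Q \<and> lifted_form p \<beta> r \<gamma>}
   \<union> (\<lambda>(p, \<alpha>, out, r). (transition_nt (p, \<alpha>, out, r), map Inr out)) ` D"

lemma finite_lifted_grammar:
  assumes "finite P"
  shows "finite (lifted_grammar P S q0 F)"
proof -
  have "{(triple_nt p B r, \<gamma>) | p B r \<beta> \<gamma>. (B, \<beta>) \<in> P \<and> p \<in> Q \<and> r \<in> Q \<and> lifted_form p \<beta> r \<gamma>}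
      \<subseteq> (\<Union>(B, \<beta>) \<in> P. \<Union>p \<in> Q. (\<lambda>(r, \<gamma>). (triple_nt p B r, \<gamma>)) ` {(r, \<gamma>). lifted_form p \<beta> r \<gamma>})"
    by force
  moreover have "finite (\<Union>(B, \<beta>) \<in> P. \<Union>p \<in> Q.
      (\<lambda>(r, \<gamma>). (triple_nt p B r, \<gamma>)) ` {(r, \<gamma>). lifted_form p \<beta> r \<gamma>})"
    using assms finite_states finite_lifted_forms by auto
  ultimately show ?thesis
    unfolding lifted_grammar_def using finite_states finite_transitions finite_subset by auto
qed

lemma lifted_grammar_start:
  "(0, \<delta>) \<in> lifted_grammar P S q0 F \<longleftrightarrow> (\<exists>f \<in> F \<inter> Q. \<delta> = [Inl (triple_nt q0 S f)])"
  unfolding lifted_grammar_def by auto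

lemma lifted_grammar_triple_nt:
  assumes "p \<in> Q" "r \<in> Q"
  shows "(triple_nt p B r, \<delta>) \<in> lifted_grammar P S q0 F \<longleftrightarrow> (\<exists>\<beta>. (B, \<beta>) \<in> P \<and> lifted_form p \<beta> r \<delta>)"
proof -
  have "(triple_nt p B r, \<delta>) \<in> lifted_grammar P S q0 F \<longleftrightarrow>
      (\<exists>p' B' r' \<beta>. triple_nt p B r = triple_nt p' B' r' \<and>
        (B', \<beta>) \<in> P \<and> p' \<in> Q \<and> r' \<in> Q \<and> lifted_form p' \<beta> r' \<delta>)"
    unfolding lifted_grammar_def by auto
  then show ?thesis
    using assms by (auto dest: triple_nt_eq_iff[THEN iffD1, rotated 4])
qed

lemma lifted_grammar_transition_nt:
  assumes "(p, \<alpha>, out, r) \<in> D"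
  shows "(transition_nt (p, \<alpha>, out, r), \<delta>) \<in> lifted_grammar P S q0 F \<longleftrightarrow> \<delta> = map Inr out"
proof -
  have "(transition_nt (p, \<alpha>, out, r), \<delta>) \<in> lifted_grammar P S q0 F \<longleftrightarrow>
      (\<exists>p' \<alpha>' out' r'. (p', \<alpha>', out', r') \<in> D \<and>
         transition_nt (p, \<alpha>, out, r) = transition_nt (p', \<alpha>', out', r') \<and> \<delta> = map Inr out')"
    unfolding lifted_grammar_def by (auto; force)
  then show ?thesis
    using assms by (auto dest: transition_nt_eq_iff[THEN iffD1, rotated 2])
qed

lemma lifted_form_Inl_iff:
  "lifted_form p [Inl B] q \<gamma> \<longleftrightarrow> p \<in> Q \<and> q \<in> Q \<and> \<gamma> = [Inl (triple_nt p B q)]"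
proof
  assume "lifted_form p [Inl B] q \<gamma>"
  then obtain r \<gamma>' where "p \<in> Q" "r \<in> Q" "lifted_form r [] q \<gamma>'" "\<gamma> = Inl (triple_nt p B r) # \<gamma>'"
    by (cases rule: lifted_form.cases) auto
  moreover from \<open>lifted_form r [] q \<gamma>'\<close> have "q = r \<and> \<gamma>' = []"
    by (cases rule: lifted_form.cases) auto
  ultimately show "p \<in> Q \<and> q \<in> Q \<and> \<gamma> = [Inl (triple_nt p B q)]" by simp
qed (auto intro: lifted_Inl lifted_Nil)

lemma lifted_form_if_derives:
  assumes "derives P \<alpha> w" "p \<in> Q" "transduces D p w q ou"
  shows "\<exists>\<gamma>. lifted_form p \<alpha> q \<gamma> \<and> derives (lifted_grammar P S q0 F) \<gamma> ou"
  using assms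
proof (induction arbitrary: p q ou rule: derives.induct)
  case der_nil
  then show ?case by (auto simp: transduces_Nil_iff intro: lifted_Nil)
next
  case (der_term \<alpha> w t)
  from der_term.prems(2) obtain out r ou' where
    step: "(p, [t], out, r) \<in> D" and rest: "transduces D r w q ou'" and ou: "ou = out @ ou'"
    by (rule transduces_ConsE)
  from der_term.IH[OF _ rest] step obtain \<gamma> where
    lift: "lifted_form r \<alpha> q \<gamma>" and der: "derives (lifted_grammar P S q0 F) \<gamma> ou'"
    using transition_states by blast
  have "derives (lifted_grammar P S q0 F) (Inl (transition_nt (p, [t], out, r)) # \<gamma>) (out @ ou')"
    using derives.der_nt[OF _ _ der] step
    by (simp add: lifted_grammar_transition_nt derives_map_Inr_iff)
  with lifted_Inr[OF step lift] ou show ?case by blast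
next
  case (der_nt B \<beta> u \<alpha> w)
  from transduces_append_split[OF der_nt.prems(2)] obtain r o1 o2 where
    first: "transduces D p u r o1" and rest: "transduces D r w q o2" and ou: "ou = o1 @ o2"
    by blast
  have r: "r \<in> Q" using transduces_target_state[OF first der_nt.prems(1)] .
  from der_nt.IH(1)[OF der_nt.prems(1) first] obtain \<delta> where
    "lifted_form p \<beta> r \<delta>" and der1: "derives (lifted_grammar P S q0 F) \<delta> o1"
    by blast
  then have rule: "(triple_nt p B r, \<delta>) \<in> lifted_grammar P S q0 F"
    using der_nt.hyps(1) der_nt.prems(1) r by (auto simp: lifted_grammar_triple_nt)
  from der_nt.IH(2)[OF r rest] obtain \<gamma> where
    lift2: "lifted_form r \<alpha> q \<gamma>" and der2: "derives (lifted_grammar P S q0 F) \<gamma> o2"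
    by blast
  have "derives (lifted_grammar P S q0 F) (Inl (triple_nt p B r) # \<gamma>) (o1 @ o2)"
    using derives.der_nt[OF rule der1 der2] .
  with lifted_Inl[OF der_nt.prems(1) r lift2] ou show ?case by blast
qed

lemma derives_if_lifted_form:
  assumes "derives (lifted_grammar P S q0 F) \<gamma> ou" "lifted_form p \<alpha> q \<gamma>"
  shows "\<exists>w. derives P \<alpha> w \<and> transduces D p w q ou"
  using assms
proof (induction arbitrary: p \<alpha> q rule: derives.induct)
  case der_nil
  then have "\<alpha> = [] \<and> q = p" by (cases rule: lifted_form.cases) auto
  then show ?case by (auto intro: transduces_Nil)
next
  case der_term
  then show ?case by (auto elim: lifted_form.cases)
next
  case (der_nt C \<delta> u \<gamma> ou)
  from der_nt.prems show ?case
  proof (cases rule: lifted_form.cases)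
    case (lifted_Inl r \<alpha>' B)
    then obtain \<beta> where "(B, \<beta>) \<in> P" "lifted_form p \<beta> r \<delta>"
      using der_nt.hyps(1) by (auto simp: lifted_grammar_triple_nt)
    with der_nt.IH(1) obtain w1 where "derives P \<beta> w1" "transduces D p w1 r u"
      by blast
    moreover from der_nt.IH(2) lifted_Inl obtain w2 where
      "derives P \<alpha>' w2" "transduces D r w2 q ou"
      by blast
    ultimately show ?thesis
      using lifted_Inl derives.der_nt[OF \<open>(B, \<beta>) \<in> P\<close>] by (auto intro: transduces_append)
  next
    case (lifted_Inr t out r \<alpha>')
    then have "u = out"
      using der_nt.hyps by (simp add: lifted_grammar_transition_nt derives_map_Inr_iff)
    moreover from der_nt.IH(2) lifted_Inr obtain w2 where
      "derives P \<alpha>' w2" "transduces D r w2 q ou"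
      by blast
    ultimately show ?thesis
      using lifted_Inr transduces_step[of p "[t]" out r D w2 q ou]
      by (auto intro: derives.der_term)
  qed
qed

lemma cfg_lang_lifted_grammar:
  assumes "q0 \<in> Q"
  shows "cfg_lang (lifted_grammar P S q0 F) 0 =
    {ou. \<exists>w \<in> cfg_lang P S. \<exists>f \<in> F. transduces D q0 w f ou}"
proof (intro equalityI subsetI)
  fix ou assume "ou \<in> cfg_lang (lifted_grammar P S q0 F) 0"
  then obtain f where f: "f \<in> F \<inter> Q"
    and der: "derives (lifted_grammar P S q0 F) [Inl (triple_nt q0 S f)] ou"
    by (auto simp: cfg_lang_def derives_Inl_iff[of _ 0] lifted_grammar_start)
  have "lifted_form q0 [Inl S] f [Inl (triple_nt q0 S f)]"
    using assms f by (simp add: lifted_form_Inl_iff)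
  with der obtain w where "derives P [Inl S] w" "transduces D q0 w f ou"
    using derives_if_lifted_form by blast
  with f show "ou \<in> {ou. \<exists>w \<in> cfg_lang P S. \<exists>f \<in> F. transduces D q0 w f ou}"
    unfolding cfg_lang_def by blast
next
  fix ou assume "ou \<in> {ou. \<exists>w \<in> cfg_lang P S. \<exists>f \<in> F. transduces D q0 w f ou}"
  then obtain w f where w: "derives P [Inl S] w" and f: "f \<in> F" and run: "transduces D q0 w f ou"
    unfolding cfg_lang_def by blast
  from lifted_form_if_derives[OF w assms run] obtain \<gamma> where
    "lifted_form q0 [Inl S] f \<gamma>" "derives (lifted_grammar P S q0 F) \<gamma> ou"
    by blast
  then have "f \<in> Q" "derives (lifted_grammar P S q0 F) [Inl (triple_nt q0 S f)] ou"
    by (simp_all add: lifted_form_Inl_iff)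
  with f show "ou \<in> cfg_lang (lifted_grammar P S q0 F) 0"
    unfolding cfg_lang_def by (auto simp: derives_Inl_iff[of _ 0] lifted_grammar_start)
qed

lemma context_free_transduction_image:
  assumes "context_free L" "q0 \<in> Q"
  shows "context_free {ou. \<exists>w \<in> L. \<exists>f \<in> F. transduces D q0 w f ou}"
proof -
  from assms(1) obtain P S where P: "finite P" and L: "L = cfg_lang P S"
    unfolding context_free_def by blast
  have "{ou. \<exists>w \<in> L. \<exists>f \<in> F. transduces D q0 w f ou} = cfg_lang (lifted_grammar P S q0 F) 0"
    unfolding L cfg_lang_lifted_grammar[OF assms(2)] ..
  with finite_lifted_grammar[OF P] show ?thesis
    unfolding context_free_def by blast
qed

end

text \<open>Splitting every transition into single letters: the state (r, \<alpha>) still has to read the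
  rest \<alpha> of a label before it reaches r, and (p, []) plays the role of p.\<close>

definition letter_split ::
    "('q \<times> 'i list \<times> 'o list \<times> 'q) set \<Rightarrow>
      (('q \<times> 'i list) \<times> 'i list \<times> 'o list \<times> ('q \<times> 'i list)) set" where
  "letter_split D =
     {((p, []), [a], out, (r, \<alpha>)) | p a \<alpha> out r. (p, a # \<alpha>, out, r) \<in> D}
   \<union> {((r, a # \<alpha>), [a], [], (r, \<alpha>)) | r a \<alpha>. \<exists>p \<beta> out. (p, \<beta> @ a # \<alpha>, out, r) \<in> D}"

definition split_states :: "('q \<times> 'i list \<times> 'o list \<times> 'q) set \<Rightarrow> 'q \<Rightarrow> ('q \<times> 'i list) set" where
  "split_states D q0 =
     insert (q0, []) (\<Union>(p, \<alpha>, out, r) \<in> D. insert (p, []) ({r} \<times> set (suffixes \<alpha>)))"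

lemma split_statesI:
  assumes "(p, \<beta> @ \<alpha>, out, r) \<in> D"
  shows "(p, []) \<in> split_states D q0" "(r, \<alpha>) \<in> split_states D q0"
  unfolding split_states_def
  by (rule insertI2, rule UN_I[OF assms], simp add: suffix_def)+

lemma letter_split_cases:
  assumes "e \<in> letter_split D"
  obtains (first) p a \<alpha> out r where "e = ((p, []), [a], out, (r, \<alpha>))" "(p, a # \<alpha>, out, r) \<in> D"
    | (rest) r a \<alpha> p \<beta> out where "e = ((r, a # \<alpha>), [a], [], (r, \<alpha>))" "(p, \<beta> @ a # \<alpha>, out, r) \<in> D"
  using assms unfolding letter_split_def by auto

lemma letter_split_states:
  assumes "(s, \<alpha>, out, t) \<in> letter_split D"
  shows "s \<in> split_states D q0 \<and> t \<in> split_states D q0"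
  using assms
proof (cases rule: letter_split_cases)
  case (first p a \<alpha>' out' r)
  then show ?thesis
    using split_statesI[of p "[]" "a # \<alpha>'" out' r D q0] split_statesI[of p "[a]" \<alpha>' out' r D q0]
    by auto
next
  case (rest r a \<alpha>' p \<beta> out')
  then show ?thesis
    using split_statesI[of p \<beta> "a # \<alpha>'" out' r D q0] split_statesI[of p "\<beta> @ [a]" \<alpha>' out' r D q0]
    by auto
qed

lemma finite_split_states: "finite D \<Longrightarrow> finite (split_states D q0)"
  unfolding split_states_def by auto

lemma finite_letter_split:
  assumes "finite D"
  shows "finite (letter_split D)"
proof (rule finite_subset)
  show "letter_split D \<subseteq>
      (\<lambda>(p, \<alpha>, out, r). ((p, []), [hd \<alpha>], out, (r, tl \<alpha>))) ` D
    \<union> (\<lambda>(r, \<alpha>). ((r, \<alpha>), [hd \<alpha>], [], (r, tl \<alpha>))) ` split_states D q0" (is "_ \<subseteq> ?first \<union> ?rest")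
  proof
    fix e assume "e \<in> letter_split D"
    then show "e \<in> ?first \<union> ?rest"
    proof (cases rule: letter_split_cases)
      case (first p a \<alpha> out r)
      then show ?thesis by (intro UnI1 image_eqI[where x = "(p, a # \<alpha>, out, r)"]) auto
    next
      case (rest r a \<alpha> p \<beta> out)
      then show ?thesis
        by (intro UnI2 image_eqI[where x = "(r, a # \<alpha>)"]) (auto intro: split_statesI)
    qed
  qed
  show "finite (?first \<union> ?rest)"
    by (intro finite_UnI finite_imageI assms finite_split_states)
qed

lemma letter_transducer_letter_split:
  assumes "finite D"
  shows "letter_transducer (letter_split D) (split_states D q0)"
proof
  show "finite (split_states D q0)"
    using assms by (rule finite_split_states)
  show "finite (letter_split D)"
    using assms by (rule finite_letter_split)
  show "s \<in> split_states D q0 \<and> t \<in> split_states D q0" if "(s, \<alpha>, out, t) \<in> letter_split D"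
    for s \<alpha> out t
    using that by (rule letter_split_states)
  show "length \<alpha> = 1" if "(s, \<alpha>, out, t) \<in> letter_split D" for s \<alpha> out t
    using that by (cases rule: letter_split_cases) auto
qed

lemma transduces_letter_split_suffix:
  "(p, \<beta> @ \<alpha>, out, r) \<in> D \<Longrightarrow> transduces (letter_split D) (r, \<alpha>) \<alpha> (r, []) []"
proof (induction \<alpha> arbitrary: \<beta>)
  case Nil
  show ?case by (rule transduces_Nil)
next
  case (Cons a \<alpha>)
  then have "((r, a # \<alpha>), [a], [], (r, \<alpha>)) \<in> letter_split D"
    unfolding letter_split_def by blast
  moreover have "transduces (letter_split D) (r, \<alpha>) \<alpha> (r, []) []"
    using Cons.IH[of "\<beta> @ [a]"] Cons.prems by simp
  ultimately show ?case
    using transduces_step by fastforce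
qed

lemma transduces_letter_split_iff:
  assumes "\<And>p \<alpha> out r. (p, \<alpha>, out, r) \<in> D \<Longrightarrow> \<alpha> \<noteq> []"
  shows "transduces (letter_split D) (p, []) w (q, []) ou \<longleftrightarrow> transduces D p w q ou"
proof
  have "\<exists>w'. w = snd s @ w' \<and> transduces D (fst s) w' q ou"
    if "transduces (letter_split D) s w t ou" "t = (q, [])" for s t w ou
    using that
  proof (induction rule: transduces.induct)
    case (transduces_Nil s)
    then show ?case by (auto intro: transduces.transduces_Nil)
  next
    case (transduces_step s \<alpha> out s' w t ou)
    from transduces_step.hyps(1) show ?case
    proof (cases rule: letter_split_cases)
      case (first p a \<alpha>' out' r)
      with transduces_step obtain w' where "w = \<alpha>' @ w'" "transduces D r w' q ou"
        by auto
      with first show ?thesis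
        using transduces.transduces_step[OF first(2), of w' q ou] by auto
    next
      case rest
      with transduces_step show ?thesis by auto
    qed
  qed
  from this[of "(p, [])" w "(q, [])" ou]
  show "transduces (letter_split D) (p, []) w (q, []) ou \<Longrightarrow> transduces D p w q ou"
    by simp
next
  show "transduces D p w q ou \<Longrightarrow> transduces (letter_split D) (p, []) w (q, []) ou"
  proof (induction rule: transduces.induct)
    case (transduces_Nil p)
    show ?case by (rule transduces.transduces_Nil)
  next
    case (transduces_step p \<alpha> out r w q ou)
    then obtain a \<alpha>' where \<alpha>: "\<alpha> = a # \<alpha>'" using assms by (cases \<alpha>) auto
    with transduces_step(1) have "((p, []), [a], out, (r, \<alpha>')) \<in> letter_split D"
      unfolding letter_split_def by auto
    moreover have "transduces (letter_split D) (r, \<alpha>') \<alpha>' (r, []) []"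
      using transduces_step(1) \<alpha> transduces_letter_split_suffix[of p "[a]"] by simp
    ultimately have "transduces (letter_split D) (p, []) ([a] @ \<alpha>') (r, []) (out @ [])"
      by (rule transduces.transduces_step)
    from transduces_append[OF this transduces_step.IH] show ?case
      using \<alpha> by simp
  qed
qed

theorem context_free_transduction:
  assumes "context_free L" "finite D" "\<And>p \<alpha> out r. (p, \<alpha>, out, r) \<in> D \<Longrightarrow> \<alpha> \<noteq> []"
  shows "context_free {ou. \<exists>w \<in> L. \<exists>f \<in> F. transduces D q0 w f ou}"
proof -
  interpret letter_transducer "letter_split D" "split_states D q0"
    using assms(2) by (rule letter_transducer_letter_split)
  have "context_free
      {ou. \<exists>w \<in> L. \<exists>f \<in> (\<lambda>f. (f, [])) ` F. transduces (letter_split D) (q0, []) w f ou}"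
    by (rule context_free_transduction_image[OF assms(1)]) (simp add: split_states_def)
  then show ?thesis
    using transduces_letter_split_iff[of D, OF assms(3)] by simp
qed

section \<open>Loop words\<close>

lemma mult1_None_right [simp]: "mult1 a None = a"
  by (cases a) auto

lemma mult1_assoc: "mult1 (mult1 a b) c = mult1 a (mult1 b c)"
  by (cases a; cases b; cases c) (auto simp: mult.assoc)

lemma eval1_Nil [simp]: "eval1 g [] = None"
  by (simp add: eval1_def)

lemma eval1_Cons [simp]: "eval1 g (x # w) = mult1 (Some (g x)) (eval1 g w)"
  by (simp add: eval1_def)

lemma eval1_append: "eval1 g (u @ v) = mult1 (eval1 g u) (eval1 g v)"
  by (induction u) (auto simp: mult1_assoc)

lemma eval1_eq_Some_sigma: "w \<noteq> [] \<Longrightarrow> eval1 g w = Some (sigma g w)"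
  by (cases w; cases "eval1 g (tl w)") (auto simp: sigma_def)

lemma eval1_concat_map:
  "(\<And>x. x \<in> set u \<Longrightarrow> eval1 h (\<phi> x) = Some (g x)) \<Longrightarrow> eval1 h (concat (map \<phi> u)) = eval1 g u"
  by (induction u) (auto simp: eval1_append)

lemma sigma_map: "sigma g (map f w) = sigma (g \<circ> f) w"
proof -
  have "eval1 g (map f w) = eval1 (g \<circ> f) w"
    by (induction w) auto
  then show ?thesis by (simp add: sigma_def)
qed

lemma loop_path_Nil_iff: "loop_path Y h a [] c \<longleftrightarrow> a = c"
  by (auto elim: loop_path.cases intro: lp_nil)

lemma loop_path_map_Inl_iff:
  "set ys \<subseteq> Y \<Longrightarrow>
    loop_path Y h a (map Inl ys @ rest) c \<longleftrightarrow> loop_path Y h (mult1 a (eval1 h ys)) rest c"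
proof (induction ys arbitrary: a)
  case Nil
  then show ?case by simp
next
  case (Cons y ys)
  have "loop_path Y h a (Inl y # map Inl ys @ rest) c \<longleftrightarrow>
      loop_path Y h (mult1 a (Some (h y))) (map Inl ys @ rest) c"
    using Cons.prems by (auto elim: loop_path.cases intro: lp_fwd)
  with Cons show ?case by (simp add: mult1_assoc)
qed

lemma loop_path_map_Inr_rev_iff:
  "set ys \<subseteq> Y \<Longrightarrow> loop_path Y h a (map Inr (rev ys)) c \<longleftrightarrow> a = mult1 c (eval1 h ys)"
proof (induction ys arbitrary: a rule: rev_induct)
  case Nil
  then show ?case by (simp add: loop_path_Nil_iff)
next
  case (snoc y ys)
  have "loop_path Y h a (Inr y # map Inr (rev ys)) c \<longleftrightarrow>
      (\<exists>b. mult1 b (Some (h y)) = a \<and> loop_path Y h b (map Inr (rev ys)) c)"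
    using snoc.prems by (auto elim: loop_path.cases intro: lp_bwd)
  with snoc show ?case by (auto simp: eval1_append mult1_assoc)
qed

definition loop_word :: "('x \<Rightarrow> 'y list) \<Rightarrow> 'x list \<Rightarrow> 'x list \<Rightarrow> 'x list \<Rightarrow> ('y + 'y) list" where
  "loop_word \<phi> u v w =
     map Inl (concat (map \<phi> u)) @ map Inl (concat (map \<phi> v)) @ map Inr (rev (concat (map \<phi> w)))"

lemma loop_word_in_loop_problem_iff:
  assumes \<phi>: "\<And>x. x \<in> X \<Longrightarrow> \<phi> x \<in> plus_words Y \<and> sigma h (\<phi> x) = g x"
    and uvw: "u \<in> lists X" "v \<in> lists X" "w \<in> lists X" "u @ v \<noteq> []" "w \<noteq> []"
  shows "loop_word \<phi> u v w \<in> loop_problem Y h \<longleftrightarrow> sigma g (u @ v) = sigma g w"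
proof -
  have eval: "eval1 h (concat (map \<phi> z)) = eval1 g z" if "z \<in> lists X" for z
    using that \<phi> by (intro eval1_concat_map) (auto simp: plus_words_def eval1_eq_Some_sigma)
  have lists: "set (concat (map \<phi> z)) \<subseteq> Y" if "z \<in> lists X" for z
    using that \<phi> by (auto simp: plus_words_def)
  have "loop_word \<phi> u v w = map Inl (concat (map \<phi> (u @ v))) @ map Inr (rev (concat (map \<phi> w)))"
    by (simp add: loop_word_def)
  then have "loop_word \<phi> u v w \<in> loop_problem Y h \<longleftrightarrow>
      eval1 h (concat (map \<phi> (u @ v))) = eval1 h (concat (map \<phi> w))"
    using uvw lists[of "u @ v"] lists[of w]
    by (simp add: loop_problem_def loop_path_map_Inl_iff loop_path_map_Inr_rev_iff eval1_append)
  also have "\<dots> \<longleftrightarrow> sigma g (u @ v) = sigma g w"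
    using uvw eval[of "u @ v"] eval[of w] by (simp add: eval1_eq_Some_sigma)
  finally show ?thesis .
qed

section \<open>The multiplication table as a transduction of the loop problem\<close>

datatype table_state = Start | In_u | In_v | In_w

definition table_transducer ::
    "'x set \<Rightarrow> ('x \<Rightarrow> 'y list) \<Rightarrow>
      (table_state \<times> ('y + 'y) list \<times> 'x option list \<times> table_state) set" where
  "table_transducer X \<phi> = (\<Union>x \<in> X.
     {(Start, map Inl (\<phi> x), [Some x], In_u), (In_u, map Inl (\<phi> x), [Some x], In_u),
      (In_u, map Inl (\<phi> x), [None, Some x], In_v), (In_v, map Inl (\<phi> x), [Some x], In_v),
      (In_v, map Inr (rev (\<phi> x)), [None, Some x], In_w), (In_w, map Inr (rev (\<phi> x)), [Some x], In_w)})"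

abbreviation table_entry :: "'x list \<Rightarrow> 'x list \<Rightarrow> 'x list \<Rightarrow> 'x option list" where
  "table_entry u v w \<equiv> map Some u @ [None] @ map Some v @ [None] @ map Some (rev w)"

text \<open>The input and output of the runs from a given state to In_w.\<close>

fun table_suffix ::
    "'x set \<Rightarrow> ('x \<Rightarrow> 'y list) \<Rightarrow> table_state \<Rightarrow> ('y + 'y) list \<Rightarrow> 'x option list \<Rightarrow> bool" where
  "table_suffix X \<phi> Start s ou \<longleftrightarrow>
     (\<exists>u v w. u \<in> plus_words X \<and> v \<in> plus_words X \<and> w \<in> plus_words X \<and>
       s = loop_word \<phi> u v w \<and> ou = table_entry u v w)"
| "table_suffix X \<phi> In_u s ou \<longleftrightarrow>
     (\<exists>u v w. u \<in> lists X \<and> v \<in> plus_words X \<and> w \<in> plus_words X \<and>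
       s = loop_word \<phi> u v w \<and> ou = table_entry u v w)"
| "table_suffix X \<phi> In_v s ou \<longleftrightarrow>
     (\<exists>v w. v \<in> lists X \<and> w \<in> plus_words X \<and>
       s = loop_word \<phi> [] v w \<and> ou = map Some v @ [None] @ map Some (rev w))"
| "table_suffix X \<phi> In_w s ou \<longleftrightarrow>
     (\<exists>w. w \<in> lists X \<and> s = loop_word \<phi> [] [] w \<and> ou = map Some (rev w))"

lemma loop_word_prepend [simp]:
  "loop_word \<phi> (x # u) v w = map Inl (\<phi> x) @ loop_word \<phi> u v w"
  "loop_word \<phi> [] (x # v) w = map Inl (\<phi> x) @ loop_word \<phi> [] v w"
  "loop_word \<phi> [] [] (w @ [x]) = map Inr (rev (\<phi> x)) @ loop_word \<phi> [] [] w"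
  by (simp_all add: loop_word_def)

lemma table_transducer_cases:
  assumes "(s, \<alpha>, out, r) \<in> table_transducer X \<phi>"
  obtains (start_u) x where "x \<in> X" "s = Start" "\<alpha> = map Inl (\<phi> x)" "out = [Some x]" "r = In_u"
    | (loop_u) x where "x \<in> X" "s = In_u" "\<alpha> = map Inl (\<phi> x)" "out = [Some x]" "r = In_u"
    | (u_v) x where "x \<in> X" "s = In_u" "\<alpha> = map Inl (\<phi> x)" "out = [None, Some x]" "r = In_v"
    | (loop_v) x where "x \<in> X" "s = In_v" "\<alpha> = map Inl (\<phi> x)" "out = [Some x]" "r = In_v"
    | (v_w) x where "x \<in> X" "s = In_v" "\<alpha> = map Inr (rev (\<phi> x))" "out = [None, Some x]" "r = In_w"
    | (loop_w) x where "x \<in> X" "s = In_w" "\<alpha> = map Inr (rev (\<phi> x))" "out = [Some x]" "r = In_w"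
  using assms unfolding table_transducer_def by auto

lemma table_suffix_step:
  assumes "(s, \<alpha>, out, r) \<in> table_transducer X \<phi>" "table_suffix X \<phi> r w ou"
  shows "table_suffix X \<phi> s (\<alpha> @ w) (out @ ou)"
  using assms(1)
proof (cases rule: table_transducer_cases)
  case (start_u x)
  from assms(2) obtain u v w' where ih: "u \<in> lists X" "v \<in> plus_words X" "w' \<in> plus_words X"
    "w = loop_word \<phi> u v w'" "ou = table_entry u v w'"
    unfolding start_u by auto
  show ?thesis unfolding start_u table_suffix.simps
    by (rule exI[of _ "x # u"], rule exI[of _ v], rule exI[of _ w'])
      (use start_u ih in \<open>auto simp: plus_words_def\<close>)
next
  case (loop_u x)
  from assms(2) obtain u v w' where ih: "u \<in> lists X" "v \<in> plus_words X" "w' \<in> plus_words X"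
    "w = loop_word \<phi> u v w'" "ou = table_entry u v w'"
    unfolding loop_u by auto
  show ?thesis unfolding loop_u table_suffix.simps
    by (rule exI[of _ "x # u"], rule exI[of _ v], rule exI[of _ w']) (use loop_u ih in auto)
next
  case (u_v x)
  from assms(2) obtain v w' where ih: "v \<in> lists X" "w' \<in> plus_words X"
    "w = loop_word \<phi> [] v w'" "ou = map Some v @ [None] @ map Some (rev w')"
    unfolding u_v by auto
  show ?thesis unfolding u_v table_suffix.simps
    by (rule exI[of _ "[]"], rule exI[of _ "x # v"], rule exI[of _ w'])
      (use u_v ih in \<open>auto simp: plus_words_def\<close>)
next
  case (loop_v x)
  from assms(2) obtain v w' where ih: "v \<in> lists X" "w' \<in> plus_words X"
    "w = loop_word \<phi> [] v w'" "ou = map Some v @ [None] @ map Some (rev w')"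
    unfolding loop_v by auto
  show ?thesis unfolding loop_v table_suffix.simps
    by (rule exI[of _ "x # v"], rule exI[of _ w']) (use loop_v ih in auto)
next
  case (v_w x)
  from assms(2) obtain w' where ih:
    "w' \<in> lists X" "w = loop_word \<phi> [] [] w'" "ou = map Some (rev w')"
    unfolding v_w by auto
  show ?thesis unfolding v_w table_suffix.simps
    by (rule exI[of _ "[]"], rule exI[of _ "w' @ [x]"]) (use v_w ih in \<open>auto simp: plus_words_def\<close>)
next
  case (loop_w x)
  from assms(2) obtain w' where ih:
    "w' \<in> lists X" "w = loop_word \<phi> [] [] w'" "ou = map Some (rev w')"
    unfolding loop_w by auto
  show ?thesis unfolding loop_w table_suffix.simps
    by (rule exI[of _ "w' @ [x]"]) (use loop_w ih in auto)
qed

lemma transduces_table_transducer_loop_word: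
  assumes "u \<in> plus_words X" "v \<in> plus_words X" "w \<in> plus_words X"
  shows "transduces (table_transducer X \<phi>) Start (loop_word \<phi> u v w) In_w (table_entry u v w)"
proof -
  have "u \<noteq> []" "v \<noteq> []" "w \<noteq> []"
    using assms by (auto simp: plus_words_def)
  then obtain x u' y v' z w' where uvw: "u = x # u'" "v = y # v'" "w = w' @ [z]"
    by (metis neq_Nil_conv rev_exhaust)
  let ?T = "table_transducer X \<phi>"
  have X: "x \<in> X" "y \<in> X" "z \<in> X" "set u' \<subseteq> X" "set v' \<subseteq> X" "set w' \<subseteq> X"
    using assms uvw by (auto simp: plus_words_def)
  have "transduces ?T Start (map Inl (\<phi> x)) In_u [Some x]"
    using X by (intro transduces_transition) (auto simp: table_transducer_def)
  moreover have "transduces ?T In_u (concat (map (\<lambda>x. map Inl (\<phi> x)) u')) In_u (map Some u')"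
    using X transduces_loop[of u' In_u "\<lambda>x. map Inl (\<phi> x)" "\<lambda>x. [Some x]" ?T]
    by (auto simp: table_transducer_def map_concat)
  moreover have "transduces ?T In_u (map Inl (\<phi> y)) In_v [None, Some y]"
    using X by (intro transduces_transition) (auto simp: table_transducer_def)
  moreover have "transduces ?T In_v (concat (map (\<lambda>x. map Inl (\<phi> x)) v')) In_v (map Some v')"
    using X transduces_loop[of v' In_v "\<lambda>x. map Inl (\<phi> x)" "\<lambda>x. [Some x]" ?T]
    by (auto simp: table_transducer_def map_concat)
  moreover have "transduces ?T In_v (map Inr (rev (\<phi> z))) In_w [None, Some z]"
    using X by (intro transduces_transition) (auto simp: table_transducer_def)
  moreover have "transduces ?T In_w (concat (map (\<lambda>x. map Inr (rev (\<phi> x))) (rev w'))) In_w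
      (map Some (rev w'))"
    using X transduces_loop[of "rev w'" In_w "\<lambda>x. map Inr (rev (\<phi> x))" "\<lambda>x. [Some x]" ?T]
    by (auto simp: table_transducer_def map_concat)
  ultimately have "transduces ?T Start
      (map Inl (\<phi> x) @ concat (map (\<lambda>x. map Inl (\<phi> x)) u') @ map Inl (\<phi> y) @
       concat (map (\<lambda>x. map Inl (\<phi> x)) v') @ map Inr (rev (\<phi> z)) @
       concat (map (\<lambda>x. map Inr (rev (\<phi> x))) (rev w'))) In_w
      ([Some x] @ map Some u' @ [None, Some y] @ map Some v' @ [None, Some z] @ map Some (rev w'))"
    by (intro transduces_append)
  then show ?thesis
    unfolding uvw loop_word_def by (simp add: map_concat rev_concat rev_map comp_def)
qed

lemma transduces_table_transducer_iff:
  "transduces (table_transducer X \<phi>) Start s In_w ou \<longleftrightarrow>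
    (\<exists>u v w. u \<in> plus_words X \<and> v \<in> plus_words X \<and> w \<in> plus_words X \<and>
      s = loop_word \<phi> u v w \<and> ou = table_entry u v w)"
proof
  have "table_suffix X \<phi> p s ou"
    if "transduces (table_transducer X \<phi>) p s q ou" "q = In_w" for p s q ou
    using that
  proof (induction rule: transduces.induct)
    case (transduces_Nil p)
    then show ?case by (simp add: loop_word_def)
  next
    case (transduces_step p \<alpha> out r w q ou)
    then show ?case by (simp add: table_suffix_step)
  qed
  from this[of Start s In_w ou]
  show "transduces (table_transducer X \<phi>) Start s In_w ou \<Longrightarrow>
      \<exists>u v w. u \<in> plus_words X \<and> v \<in> plus_words X \<and> w \<in> plus_words X \<and>
        s = loop_word \<phi> u v w \<and> ou = table_entry u v w"
    by simp
qed (use transduces_table_transducer_loop_word in blast)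

lemma mult_table_eq_transduced_loop_problem:
  assumes "\<And>x. x \<in> X \<Longrightarrow> \<phi> x \<in> plus_words Y \<and> sigma h (\<phi> x) = g x"
  shows "mult_table g (plus_words X) =
    {ou. \<exists>s \<in> loop_problem Y h. \<exists>f \<in> {In_w}. transduces (table_transducer X \<phi>) Start s f ou}"
proof -
  have loop: "loop_word \<phi> u v w \<in> loop_problem Y h \<longleftrightarrow> sigma g (u @ v) = sigma g w"
    if "u \<in> plus_words X" "v \<in> plus_words X" "w \<in> plus_words X" for u v w
    using that by (intro loop_word_in_loop_problem_iff[OF assms]) (auto simp: plus_words_def)
  show ?thesis
  proof (intro equalityI subsetI)
    fix ou assume "ou \<in> mult_table g (plus_words X)"
    then obtain u v w where "u \<in> plus_words X" "v \<in> plus_words X" "w \<in> plus_words X"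
      "sigma g (u @ v) = sigma g w" "ou = table_entry u v w"
      unfolding mult_table_def by blast
    with loop show "ou \<in> {ou. \<exists>s \<in> loop_problem Y h. \<exists>f \<in> {In_w}.
        transduces (table_transducer X \<phi>) Start s f ou}"
      using transduces_table_transducer_loop_word by blast
  next
    fix ou assume "ou \<in> {ou. \<exists>s \<in> loop_problem Y h. \<exists>f \<in> {In_w}.
        transduces (table_transducer X \<phi>) Start s f ou}"
    then obtain u v w where "u \<in> plus_words X" "v \<in> plus_words X" "w \<in> plus_words X"
      "loop_word \<phi> u v w \<in> loop_problem Y h" "ou = table_entry u v w"
      by (auto simp: transduces_table_transducer_iff)
    with loop show "ou \<in> mult_table g (plus_words X)"
      unfolding mult_table_def by blast
  qed
qed

lemma context_free_mult_table:
  fixes h :: "'y \<Rightarrow> 'a::semigroup_mult" and g :: "'x \<Rightarrow> 'a"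
  assumes "gen_choice Y h" "context_free (loop_problem Y h)" "finite X"
  shows "context_free (mult_table g (plus_words X))"
proof -
  have "\<forall>x. \<exists>w. w \<in> plus_words Y \<and> sigma h w = g x"
    using assms(1) by (auto simp: gen_choice_def plus_words_def)
  from choice[OF this] obtain \<phi> where \<phi>: "\<forall>x. \<phi> x \<in> plus_words Y \<and> sigma h (\<phi> x) = g x"
    by blast
  have finite: "finite (table_transducer X \<phi>)"
    using assms(3) by (simp add: table_transducer_def)
  have nonempty: "\<alpha> \<noteq> []" if "(p, \<alpha>, out, r) \<in> table_transducer X \<phi>" for p \<alpha> out r
    using that \<phi> by (auto simp: table_transducer_def plus_words_def)
  have "mult_table g (plus_words X) =
      {ou. \<exists>s \<in> loop_problem Y h. \<exists>f \<in> {In_w}. transduces (table_transducer X \<phi>) Start s f ou}"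
    using \<phi> by (intro mult_table_eq_transduced_loop_problem) blast
  also have "context_free \<dots>"
    using assms(2) finite nonempty by (rule context_free_transduction)
  finally show ?thesis .
qed

lemma regular_plus_words: "regular (plus_words X)"
proof -
  define \<delta> :: "nat \<Rightarrow> 'a \<Rightarrow> nat set" where "\<delta> q x = (if x \<in> X then {1} else {})" for q x
  have "nfa_reach \<delta> q w = (if w = [] then {q} else if set w \<subseteq> X then {1} else {})" for q w
    by (induction w arbitrary: q) (auto simp: \<delta>_def)
  then have lang: "plus_words X = {w. nfa_reach \<delta> 0 w \<inter> {1} \<noteq> {}}"
    by (auto simp: plus_words_def)
  have range: "\<delta> q x \<subseteq> {0, 1}" for q x
    by (simp add: \<delta>_def)
  show ?thesis
    unfolding regular_def
    by (rule exI[of _ "{0, 1}"], rule exI[of _ 0], rule exI[of _ "{1}"], rule exI[of _ \<delta>])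
      (use lang range in auto)
qed

lemma gen_choice_nat:
  fixes g :: "'x \<Rightarrow> 'a::semigroup_mult"
  assumes "gen_choice X g"
  obtains X' :: "nat set" and g' :: "nat \<Rightarrow> 'a" where "gen_choice X' g'"
proof -
  from assms have "finite X" by (simp add: gen_choice_def)
  then obtain f where f: "bij_betw f {0..<card X} X"
    using ex_bij_betw_nat_finite by blast
  have "\<exists>w' \<in> lists {0..<card X}. w' \<noteq> [] \<and> sigma (g \<circ> f) w' = s" for s
  proof -
    from assms obtain w where w: "w \<in> lists X" "w \<noteq> []" "sigma g w = s"
      unfolding gen_choice_def by blast
    let ?w' = "map (inv_into {0..<card X} f) w"
    have "map f ?w' = w"
      using w(1) bij_betw_inv_into_right[OF f] by (auto intro: map_idI)
    then have "sigma (g \<circ> f) ?w' = s"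
      using w(3) by (simp add: sigma_map[symmetric])
    moreover have "?w' \<in> lists {0..<card X}"
      using w(1) bij_betw_apply[OF bij_betw_inv_into[OF f]] by auto
    ultimately show ?thesis using w(2) by blast
  qed
  then show thesis
    by (intro that[of "{0..<card X}" "g \<circ> f"]) (simp add: gen_choice_def)
qed

theorem proposition6p4:
  fixes Y :: "'y set" and h :: "'y \<Rightarrow> 'a::semigroup_mult"
    and X :: "'x set" and g :: "'x \<Rightarrow> 'a"
  assumes "gen_choice Y h"
    and "context_free (loop_problem Y h)"
    and "gen_choice X g"
  shows "context_free (mult_table g (plus_words X)) \<and> word_hyperbolic_DG TYPE('a)"
proof
  show "context_free (mult_table g (plus_words X))"
    using assms by (simp add: context_free_mult_table gen_choice_def)
  obtain X' :: "nat set" and g' :: "nat \<Rightarrow> 'a" where X': "gen_choice X' g'"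
    using gen_choice_nat[OF assms(3)] .
  then have "context_free (mult_table g' (plus_words X'))"
    using assms(1,2) by (simp add: context_free_mult_table gen_choice_def)
  moreover have "\<forall>s. \<exists>w \<in> plus_words X'. sigma g' w = s"
    using X' by (auto simp: gen_choice_def plus_words_def)
  ultimately show "word_hyperbolic_DG TYPE('a)"
    unfolding word_hyperbolic_DG_def using X' regular_plus_words by blast
qed

end
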